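(* Let $\mathcal{G}=(\mathcal{V},\mathcal{E})$ be a directed graph with $n$ nodes, $m$ edges and terminals $s,t$, let $f:2^{\mathcal{E}}\to\mathbb{R}_+$ be normalized, monotone nondecreasing and submodular with Lovász extension $\tilde f$, and let $C^*$ be an $(s,t)$-cut minimizing $f$. Let $(x^*,y^* )$ be an optimal solution of the relaxation $$\min_{y\in\mathbb{R}^{\mathcal{E}},x\in\mathbb{R}^{\mathcal{V}}}\tilde f(y)\ \text{ s.t. } -x(u)+x(v)+y(e)\ge 0\ \forall e=(u,v)\in\mathcal{E},\ x(s)-x(t)\ge1,\ y\ge0,$$ with $x^*\in[0,1]^n$, $y^*\in[0,1]^m$. Order the edges so that $y^*(e_1)\ge\dots\ge y^*(e_m)$; for $i=1,\dots,m$ let $C_i=\{e_j: y^*(e_j)\ge y^*(e_i)\}$, and at the first $i$ for which $C_i$ is an $(s,t)$-cut, prune $C_i$ to a minimal $(s,t)$-cut $\widehat C\subseteq C_i$ and return it; let $\theta=y^*(e_i)$ for this $i$. Then $$f(\widehat C)\le\frac1\theta f(C^* )\le |P_{\max}|\,f(C^* )\le (n-1)f(C^* ),$$ where $P_{\max}$ is a longest simple $(s,t)$-path in $\mathcal{G}$ and $|P_{\max}|$ its number of edges.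
   Context: An $(s,t)$-cut is a set of edges whose removal disconnects all $s$-$t$ paths; it is minimal if no proper subset is a cut. The Lovász extension: for $x\in[0,1]^m$ written uniquely as $x=\sum_j\lambda_j\chi_{B_j}$ with $\lambda_j>0$ and nested level sets $B_1\subset B_2\subset\cdots$, $\tilde f(x)=\sum_j\lambda_j f(B_j)$, where $\chi_B$ is the indicator vector of $B$. *)

theory Defs
  imports Complex_Main
begin

text \<open>A directed graph is given by a finite vertex set V and an edge set
  E \<subseteq> V \<times> V; an edge e = (u,v) goes from u to v.
  A path is represented by its vertex list.\<close>

definition path_edges :: "'v list \<Rightarrow> ('v \<times> 'v) list" where
  "path_edges p = zip p (tl p)"

definition simple_st_path :: "('v \<times> 'v) set \<Rightarrow> 'v \<Rightarrow> 'v \<Rightarrow> 'v list \<Rightarrow> bool" where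
  "simple_st_path E s t p \<longleftrightarrow> p \<noteq> [] \<and> hd p = s \<and> last p = t \<and> distinct p
     \<and> set (path_edges p) \<subseteq> E"

definition is_st_cut :: "('v \<times> 'v) set \<Rightarrow> 'v \<Rightarrow> 'v \<Rightarrow> ('v \<times> 'v) set \<Rightarrow> bool" where
  "is_st_cut E s t C \<longleftrightarrow> C \<subseteq> E \<and>
     (\<forall>p. simple_st_path E s t p \<longrightarrow> set (path_edges p) \<inter> C \<noteq> {})"

definition is_minimal_st_cut :: "('v \<times> 'v) set \<Rightarrow> 'v \<Rightarrow> 'v \<Rightarrow> ('v \<times> 'v) set \<Rightarrow> bool" where
  "is_minimal_st_cut E s t C \<longleftrightarrow> is_st_cut E s t C \<and>
     (\<forall>D. D \<subset> C \<longrightarrow> \<not> is_st_cut E s t D)"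

definition normalized :: "('e set \<Rightarrow> real) \<Rightarrow> bool" where
  "normalized f \<longleftrightarrow> f {} = 0"

definition nonneg_on :: "'e set \<Rightarrow> ('e set \<Rightarrow> real) \<Rightarrow> bool" where
  "nonneg_on E f \<longleftrightarrow> (\<forall>A. A \<subseteq> E \<longrightarrow> 0 \<le> f A)"

definition monotone_set_fun :: "'e set \<Rightarrow> ('e set \<Rightarrow> real) \<Rightarrow> bool" where
  "monotone_set_fun E f \<longleftrightarrow> (\<forall>A B. A \<subseteq> B \<and> B \<subseteq> E \<longrightarrow> f A \<le> f B)"

definition submodular :: "'e set \<Rightarrow> ('e set \<Rightarrow> real) \<Rightarrow> bool" where
  "submodular E f \<longleftrightarrow> (\<forall>A B. A \<subseteq> E \<and> B \<subseteq> E \<longrightarrow> f (A \<union> B) + f (A \<inter> B) \<le> f A + f B)"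

text \<open>Lovasz extension: with v_1 > v_2 > ... > v_k > 0 the distinct positive values
  of y on E, B_j = {e. y e \<ge> v_j} (nested), \<lambda>_j = v_j - v_{j+1} (v_{k+1} = 0),
  we have y = \<Sum>_j \<lambda>_j \<chi>_{B_j} and the extension is \<Sum>_j \<lambda>_j f(B_j).\<close>
definition lovasz_ext :: "'e set \<Rightarrow> ('e set \<Rightarrow> real) \<Rightarrow> ('e \<Rightarrow> real) \<Rightarrow> real" where
  "lovasz_ext E f y =
    (let Vs = {v \<in> y ` E. 0 < v}
     in \<Sum>v\<in>Vs. (v - Max (insert 0 {w \<in> Vs. w < v})) * f {e \<in> E. v \<le> y e})"

definition relax_feasible :: "('v \<times> 'v) set \<Rightarrow> 'v \<Rightarrow> 'v \<Rightarrow> ('v \<Rightarrow> real) \<Rightarrow> (('v \<times> 'v) \<Rightarrow> real) \<Rightarrow> bool" where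
  "relax_feasible E s t x y \<longleftrightarrow>
     (\<forall>u v. (u, v) \<in> E \<longrightarrow> - x u + x v + y (u, v) \<ge> 0) \<and>
     x s - x t \<ge> 1 \<and> (\<forall>e\<in>E. y e \<ge> 0)"

end

theory Submission imports Defs begin

text \<open>Comparing y* with the integral solution of an optimal cut C* gives
  \<open>lovasz_ext E f y* \<le> f C*\<close>. As f is monotone and the gaps between the levels of y* up
  to \<theta> add up to \<theta>, the extension dominates \<open>\<theta> f(C\<^sub>i) \<ge> \<theta> f(Chat)\<close>. Because \<open>C\<^sub>i\<close> is the
  first cut, the edges with \<open>y* > \<theta>\<close> miss some simple (s,t)-path P; summing the edge
  constraints along P gives \<open>1 \<le> x*(s) - x*(t) \<le> |P| \<theta>\<close>, so \<open>1/\<theta> \<le> |P| \<le> |P\<^sub>m\<^sub>a\<^sub>x|\<close>,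
  and a simple path has at most n - 1 edges.\<close>

lemma path_edges_append:
  "xs \<noteq> [] \<Longrightarrow> ys \<noteq> [] \<Longrightarrow>
   path_edges (xs @ ys) = path_edges xs @ (last xs, hd ys) # path_edges ys"
  by (induction xs rule: induct_list012) (auto simp: path_edges_def neq_Nil_conv)

lemma path_edges_Cons_Cons: "path_edges (a # b # p) = (a, b) # path_edges (b # p)"
  by (simp add: path_edges_def)

lemma length_path_edges: "length (path_edges p) = length p - 1"
  by (simp add: path_edges_def)

lemma set_path_subset_targets:
  "p \<noteq> [] \<Longrightarrow> set p \<subseteq> insert (hd p) (snd ` set (path_edges p))"
  by (induction p rule: induct_list012) (auto simp: path_edges_Cons_Cons)

lemma simple_st_path_extend:
  assumes p: "simple_st_path E s u p" and uv: "(u, v) \<in> E"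
  shows "\<exists>q. simple_st_path E s v q"
proof (cases "v \<in> set p")
  case True
  then obtain as bs where p_split: "p = as @ v # bs" by (meson split_list)
  have "set (path_edges (as @ [v])) \<subseteq> set (path_edges p)"
    using p_split path_edges_append[of "as @ [v]" bs] by (cases "bs = []") auto
  then have "simple_st_path E s v (as @ [v])"
    using p p_split by (cases as) (auto simp: simple_st_path_def)
  then show ?thesis by blast
next
  case False
  have "path_edges (p @ [v]) = path_edges p @ [(u, v)]"
    using path_edges_append[of p "[v]"] p by (simp add: simple_st_path_def path_edges_def)
  then have "simple_st_path E s v (p @ [v])"
    using p uv False by (auto simp: simple_st_path_def)
  then show ?thesis by blast
qed

lemma simple_st_path_length_le_card:
  assumes "simple_st_path E s t p" "E \<subseteq> V \<times> V" "finite V" "s \<in> V"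
  shows "real (length (path_edges p)) \<le> real (card V) - 1"
proof -
  have "set p \<subseteq> insert (hd p) (snd ` set (path_edges p))"
    using assms(1) set_path_subset_targets by (auto simp: simple_st_path_def)
  also have "\<dots> \<subseteq> V"
    using assms by (auto simp: simple_st_path_def)
  finally have "card (set p) \<le> card V" using assms(3) by (simp add: card_mono)
  moreover have "distinct p" "p \<noteq> []" using assms(1) by (simp_all add: simple_st_path_def)
  ultimately have "length (path_edges p) + 1 \<le> card V"
    by (simp add: length_path_edges distinct_card)
  then show ?thesis by linarith
qed

lemma potential_drop_le_path_sum:
  assumes "p \<noteq> []" "set (path_edges p) \<subseteq> E"
    and edge: "\<forall>u v. (u, v) \<in> E \<longrightarrow> - x u + x v + y (u, v) \<ge> (0::real)"
  shows "x (hd p) - x (last p) \<le> sum_list (map y (path_edges p))"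
  using assms(1,2)
proof (induction p rule: induct_list012)
  case (3 a b p)
  then have "(a, b) \<in> E" by (simp add: path_edges_Cons_Cons)
  with edge have "x a - x b \<le> y (a, b)" by force
  with 3 show ?case by (auto simp: path_edges_Cons_Cons)
qed (simp_all add: path_edges_def)

lemma is_st_cut_mono:
  "is_st_cut E s t C \<Longrightarrow> C \<subseteq> D \<Longrightarrow> D \<subseteq> E \<Longrightarrow> is_st_cut E s t D"
  unfolding is_st_cut_def by blast

lemma not_st_cut_empty: "simple_st_path E s t p \<Longrightarrow> \<not> is_st_cut E s t {}"
  unfolding is_st_cut_def by blast

lemma not_st_cut_obtain_path:
  assumes "C \<subseteq> E" "\<not> is_st_cut E s t C"
  obtains p where "simple_st_path E s t p" "set (path_edges p) \<inter> C = {}"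
  using assms unfolding is_st_cut_def by auto

text \<open>The integral solution of a cut C: y is its indicator and x the indicator of the
  vertices reachable from s in \<open>E - C\<close>.\<close>
lemma relax_feasible_cut_indicator:
  assumes cut: "is_st_cut E s t C"
  shows "relax_feasible E s t
           (\<lambda>v. if \<exists>q. simple_st_path (E - C) s v q then 1 else 0)
           (\<lambda>e. if e \<in> C then 1 else 0)"
proof -
  have "simple_st_path (E - C) s s [s]"
    by (simp add: simple_st_path_def path_edges_def)
  moreover have "\<not> simple_st_path (E - C) s t q" for q
    using cut by (auto simp: simple_st_path_def is_st_cut_def)
  moreover have "\<exists>q. simple_st_path (E - C) s v q"
    if "(u, v) \<in> E - C" "simple_st_path (E - C) s u q" for u v q
    using simple_st_path_extend that by metis
  ultimately show ?thesis
    unfolding relax_feasible_def by (auto split: if_splits) blast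
qed

lemma sum_level_gaps_telescope:
  fixes S :: "real set"
  assumes "finite S" "\<forall>v\<in>S. 0 < v" "a \<in> S"
  shows "(\<Sum>v\<in>{v\<in>S. v \<le> a}. v - Max (insert 0 {w\<in>S. w < v})) = a"
  using assms(3)
proof (induction "card {w\<in>S. w < a}" arbitrary: a rule: less_induct)
  case less
  show ?case
  proof (cases "{w\<in>S. w < a} = {}")
    case True
    then have "{v\<in>S. v \<le> a} = {a}" using less.prems by force
    moreover have "Max (insert 0 {w\<in>S. w < a}) = 0" unfolding True by simp
    ultimately show ?thesis by simp
  next
    case False
    define b where "b = Max {w\<in>S. w < a}"
    have fin: "finite {w\<in>S. w < a}" using assms(1) by simp
    have b: "b \<in> S" "b < a" using Max_in[OF fin False] unfolding b_def by auto
    have b_max: "\<And>w. w \<in> S \<Longrightarrow> w < a \<Longrightarrow> w \<le> b" unfolding b_def using fin by auto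
    have gap: "Max (insert 0 {w\<in>S. w < a}) = b"
      using Max_insert[OF fin False] assms(2) b unfolding b_def[symmetric] by simp
    have split: "{v\<in>S. v \<le> a} = insert a {v\<in>S. v \<le> b}"
      using b b_max less.prems by force
    have "{w\<in>S. w < b} \<subset> {w\<in>S. w < a}" using b by auto
    then have "card {w\<in>S. w < b} < card {w\<in>S. w < a}" using fin psubset_card_mono by blast
    then have "(\<Sum>v\<in>{v\<in>S. v \<le> b}. v - Max (insert 0 {w\<in>S. w < v})) = b"
      using less.hyps b by blast
    then show ?thesis
      unfolding split using b assms(1) gap by (subst sum.insert) auto
  qed
qed

text \<open>The weights of all levels \<open>v \<le> \<theta>\<close> add up to \<theta>, and each of those level sets
  contains \<open>{e. \<theta> \<le> y e}\<close>.\<close>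
lemma lovasz_ext_ge_level:
  assumes "finite E" "nonneg_on E f" "monotone_set_fun E f" "\<theta> \<in> y ` E" "0 < \<theta>"
  shows "\<theta> * f {e\<in>E. \<theta> \<le> y e} \<le> lovasz_ext E f y"
proof -
  define Vs where "Vs = {v \<in> y ` E. 0 < v}"
  define gap where "gap v = v - Max (insert 0 {w\<in>Vs. w < v})" for v
  have fin: "finite Vs" using assms(1) unfolding Vs_def by simp
  have gap_nonneg: "0 \<le> gap v" if "v \<in> Vs" for v
  proof -
    have "\<forall>w\<in>insert 0 {w\<in>Vs. w < v}. w \<le> v" using that by (auto simp: Vs_def)
    then have "Max (insert 0 {w\<in>Vs. w < v}) \<le> v" using fin by (intro Max.boundedI) auto
    then show ?thesis by (simp add: gap_def)
  qed
  have f_mono: "f A \<le> f B" if "A \<subseteq> B" "B \<subseteq> E" for A B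
    using assms(3) that by (simp add: monotone_set_fun_def)
  have "(\<Sum>v\<in>{v\<in>Vs. v \<le> \<theta>}. gap v) = \<theta>"
    using sum_level_gaps_telescope[OF fin, of \<theta>] assms(4,5) by (simp add: gap_def Vs_def)
  then have "\<theta> * f {e\<in>E. \<theta> \<le> y e} = (\<Sum>v\<in>{v\<in>Vs. v \<le> \<theta>}. gap v * f {e\<in>E. \<theta> \<le> y e})"
    by (simp only: sum_distrib_right[symmetric])
  also have "\<dots> \<le> (\<Sum>v\<in>{v\<in>Vs. v \<le> \<theta>}. gap v * f {e\<in>E. v \<le> y e})"
    using gap_nonneg by (intro sum_mono mult_left_mono f_mono) auto
  also have "\<dots> \<le> (\<Sum>v\<in>Vs. gap v * f {e\<in>E. v \<le> y e})"
    using fin gap_nonneg assms(2) by (intro sum_mono2) (auto simp: nonneg_on_def)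
  also have "\<dots> = lovasz_ext E f y"
    by (simp add: lovasz_ext_def Vs_def gap_def Let_def)
  finally show ?thesis .
qed

lemma lovasz_ext_indicator:
  assumes "normalized f" "C \<subseteq> E"
  shows "lovasz_ext E f (\<lambda>e. if e \<in> C then 1 else 0) = f C"
proof (cases "C = {}")
  case True
  then show ?thesis using assms(1) by (simp add: lovasz_ext_def normalized_def)
next
  case False
  then have "{v \<in> (\<lambda>e. if e \<in> C then 1 else 0) ` E. 0 < v} = {1::real}"
    using assms(2) by force
  moreover have "{e\<in>E. 1 \<le> (if e \<in> C then 1 else 0::real)} = C"
    using assms(2) by auto
  moreover have "{w \<in> {1::real}. w < 1} = {}" by auto
  ultimately show ?thesis by (simp add: lovasz_ext_def Let_def del: Collect_empty_eq)
qed

lemma lovasz_ext_relax_optimum_le_cut: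
  assumes "normalized f" "is_st_cut E s t C"
    and "\<forall>x y. relax_feasible E s t x y \<longrightarrow> lovasz_ext E f y\<^sub>0 \<le> lovasz_ext E f y"
  shows "lovasz_ext E f y\<^sub>0 \<le> f C"
proof -
  have "C \<subseteq> E" using assms(2) by (simp add: is_st_cut_def)
  then show ?thesis
    using assms relax_feasible_cut_indicator lovasz_ext_indicator by metis
qed

lemma sorted_desc_nth_antimono:
  assumes "sorted_wrt (\<lambda>a b. y a \<ge> (y b :: real)) es" "k \<le> j" "j < length es"
  shows "y (es ! j) \<le> y (es ! k)"
proof (cases "k = j")
  case False
  with assms show ?thesis using sorted_wrt_nth_less[OF assms(1), of k j] by simp
qed simp

lemma sorted_desc_larger_value_earlier:
  assumes "sorted_wrt (\<lambda>a b. y a \<ge> (y b :: real)) es" "i < length es"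
    "e \<in> set es" "y (es ! i) < y e"
  shows "\<exists>k<i. es ! k = e"
proof -
  obtain k where k: "k < length es" "es ! k = e" using assms(3) by (auto simp: in_set_conv_nth)
  have "k < i"
  proof (rule ccontr)
    assume "\<not> k < i"
    then have "y e \<le> y (es ! i)"
      using sorted_desc_nth_antimono[OF assms(1), of i k] k by simp
    with assms(4) show False by simp
  qed
  with k show ?thesis by blast
qed

text \<open>If the level set of \<open>es ! i\<close> is the first cut, the strictly larger values of y do
  not form a cut: they lie in the level set of \<open>es ! (i - 1)\<close>, or are empty for \<open>i = 0\<close>.\<close>
lemma path_below_first_cut_threshold:
  assumes sorted: "sorted_wrt (\<lambda>a b. y a \<ge> (y b :: real)) es" and "set es = E"
    and "i < length es"
    and first: "\<forall>j<i. \<not> is_st_cut E s t {e \<in> E. y e \<ge> y (es ! j)}"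
    and path: "simple_st_path E s t P"
  obtains p where "simple_st_path E s t p" "\<forall>e\<in>set (path_edges p). y e \<le> y (es ! i)"
proof -
  let ?above = "{e\<in>E. y (es ! i) < y e}"
  have earlier: "\<exists>k<i. es ! k = e" if "e \<in> ?above" for e
    using sorted_desc_larger_value_earlier[OF sorted assms(3)] assms(2) that by blast
  have "\<not> is_st_cut E s t ?above"
  proof (cases i)
    case 0
    then have "?above = {}" using earlier by blast
    with not_st_cut_empty[OF path] show ?thesis by argo
  next
    case (Suc j)
    have "?above \<subseteq> {e \<in> E. y e \<ge> y (es ! j)}"
    proof
      fix e assume e: "e \<in> ?above"
      then obtain k where "k < i" "es ! k = e" using earlier by blast
      then have "y (es ! j) \<le> y e"
        using sorted_desc_nth_antimono[OF sorted, of k j] Suc assms(3) by simp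
      with e show "e \<in> {e \<in> E. y e \<ge> y (es ! j)}" by simp
    qed
    moreover have "\<not> is_st_cut E s t {e \<in> E. y e \<ge> y (es ! j)}" using first Suc by simp
    ultimately show ?thesis
      using is_st_cut_mono[of E s t ?above "{e \<in> E. y e \<ge> y (es ! j)}"] by blast
  qed
  then obtain p where p: "simple_st_path E s t p" "set (path_edges p) \<inter> ?above = {}"
    using not_st_cut_obtain_path[of ?above E s t] by blast
  have "y e \<le> y (es ! i)" if "e \<in> set (path_edges p)" for e
    using p that by (auto simp: simple_st_path_def)
  with p(1) show ?thesis using that by blast
qed

lemma relax_feasible_threshold_bound:
  assumes feas: "relax_feasible E s t x y" and p: "simple_st_path E s t p"
    and below: "\<forall>e\<in>set (path_edges p). y e \<le> \<theta>"
  shows "0 < \<theta>" "1 / \<theta> \<le> real (length (path_edges p))"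
proof -
  have edge: "\<forall>u v. (u, v) \<in> E \<longrightarrow> - x u + x v + y (u, v) \<ge> 0"
    using feas by (simp add: relax_feasible_def)
  have "p \<noteq> []" "set (path_edges p) \<subseteq> E" "hd p = s" "last p = t"
    using p by (simp_all add: simple_st_path_def)
  moreover have "1 \<le> x s - x t" using feas by (simp add: relax_feasible_def)
  ultimately have "1 \<le> sum_list (map y (path_edges p))"
    using potential_drop_le_path_sum[OF _ _ edge, of p] by simp
  also have "\<dots> \<le> real (length (path_edges p)) * \<theta>"
    using below sum_list_mono[of "path_edges p" y "\<lambda>_. \<theta>"] by (simp add: sum_list_triv)
  finally have one: "1 \<le> real (length (path_edges p)) * \<theta>" .
  show pos: "0 < \<theta>"
  proof (rule ccontr)
    assume "\<not> 0 < \<theta>"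
    then have "real (length (path_edges p)) * \<theta> \<le> 0" by (simp add: mult_nonneg_nonpos)
    with one show False by simp
  qed
  from one pos show "1 / \<theta> \<le> real (length (path_edges p))" by (simp add: divide_le_eq)
qed

theorem lemma9:
  fixes V :: "'v set" and E :: "('v \<times> 'v) set" and s t :: 'v
    and f :: "('v \<times> 'v) set \<Rightarrow> real"
    and Cstar Chat :: "('v \<times> 'v) set"
    and xs :: "'v \<Rightarrow> real" and ys :: "('v \<times> 'v) \<Rightarrow> real"
    and es :: "('v \<times> 'v) list" and i :: nat
    and Pmax :: "'v list"
  assumes finV: "finite V" and EV: "E \<subseteq> V \<times> V"
    and sV: "s \<in> V" and tV: "t \<in> V" and st: "s \<noteq> t"
    and f_norm: "normalized f" and f_nonneg: "nonneg_on E f"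
    and f_mono: "monotone_set_fun E f" and f_sub: "submodular E f"
    and Cstar_cut: "is_st_cut E s t Cstar"
    and Cstar_min: "\<forall>C. is_st_cut E s t C \<longrightarrow> f Cstar \<le> f C"
    and opt_feas: "relax_feasible E s t xs ys"
    and opt_min: "\<forall>x y. relax_feasible E s t x y \<longrightarrow> lovasz_ext E f ys \<le> lovasz_ext E f y"
    and xs_01: "\<forall>v\<in>V. 0 \<le> xs v \<and> xs v \<le> 1"
    and ys_01: "\<forall>e\<in>E. 0 \<le> ys e \<and> ys e \<le> 1"
    and es_enum: "distinct es" "set es = E"
    and es_sorted: "sorted_wrt (\<lambda>a b. ys a \<ge> ys b) es"
    and i_range: "i < length es"
    and i_cut: "is_st_cut E s t {e \<in> E. ys e \<ge> ys (es ! i)}"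
    and i_first: "\<forall>j<i. \<not> is_st_cut E s t {e \<in> E. ys e \<ge> ys (es ! j)}"
    and Chat_sub: "Chat \<subseteq> {e \<in> E. ys e \<ge> ys (es ! i)}"
    and Chat_min: "is_minimal_st_cut E s t Chat"
    and Pmax_path: "simple_st_path E s t Pmax"
    and Pmax_longest: "\<forall>p. simple_st_path E s t p \<longrightarrow> length p \<le> length Pmax"
  shows "f Chat \<le> (1 / ys (es ! i)) * f Cstar \<and>
         (1 / ys (es ! i)) * f Cstar \<le> real (length (path_edges Pmax)) * f Cstar \<and>
         real (length (path_edges Pmax)) * f Cstar \<le> (real (card V) - 1) * f Cstar"
proof -
  define \<theta> where "\<theta> = ys (es ! i)"
  have finE: "finite E" using finite_subset[OF EV] finV by blast
  have fCstar: "0 \<le> f Cstar" using f_nonneg Cstar_cut by (simp add: nonneg_on_def is_st_cut_def)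
  obtain p where p: "simple_st_path E s t p" "\<forall>e\<in>set (path_edges p). ys e \<le> \<theta>"
    using path_below_first_cut_threshold[OF es_sorted es_enum(2) i_range i_first Pmax_path]
    unfolding \<theta>_def by blast
  note pos = relax_feasible_threshold_bound(1)[OF opt_feas p]
  have "length (path_edges p) \<le> length (path_edges Pmax)"
    using Pmax_longest p(1) by (simp add: length_path_edges diff_le_mono)
  then have "1 / \<theta> \<le> real (length (path_edges Pmax))"
    using relax_feasible_threshold_bound(2)[OF opt_feas p] by linarith
  then have part2: "1 / \<theta> * f Cstar \<le> real (length (path_edges Pmax)) * f Cstar"
    using fCstar by (rule mult_right_mono)
  have "\<theta> \<in> ys ` E" using i_range es_enum(2) unfolding \<theta>_def by (metis image_eqI nth_mem)
  then have "\<theta> * f {e\<in>E. \<theta> \<le> ys e} \<le> f Cstar"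
    using lovasz_ext_ge_level[OF finE f_nonneg f_mono _ pos]
      lovasz_ext_relax_optimum_le_cut[OF f_norm Cstar_cut opt_min] by (meson order_trans)
  moreover have "f Chat \<le> f {e\<in>E. \<theta> \<le> ys e}"
    using f_mono Chat_sub unfolding monotone_set_fun_def \<theta>_def by blast
  ultimately have "\<theta> * f Chat \<le> f Cstar" using pos by (meson less_imp_le mult_left_mono order_trans)
  with pos have part1: "f Chat \<le> 1 / \<theta> * f Cstar" by (simp add: pos_le_divide_eq mult.commute)
  have part3: "real (length (path_edges Pmax)) * f Cstar \<le> (real (card V) - 1) * f Cstar"
    using simple_st_path_length_le_card[OF Pmax_path EV finV sV] fCstar by (rule mult_right_mono)
  show ?thesis using part1 part2 part3 unfolding \<theta>_def by blast
qed

end
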